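(* Let $0\le\alpha<\beta$ with $\alpha+\beta<2$, and set $c_1=\alpha+\beta$, $c_2=\beta-\alpha$. Define $\tilde\Phi:\mathbb{R}^2\to\mathbb{R}$ by \[ \tilde\Phi(x,y)=\tfrac14c_1x^2+\tfrac14c_2y^2-\tfrac12\log\cosh\!\Big(\tfrac{c_1x+c_2y}{2}\Big)-\tfrac12\log\cosh\!\Big(\tfrac{c_1x-c_2y}{2}\Big). \] Then $(0,0)$ is the unique critical point of $\tilde\Phi$, and for every $r>0$, $\inf_{(x,y)\notin B(0,r)}\tilde\Phi(x,y)>0$, where $B(0,r)$ is the open Euclidean ball of radius $r$ about the origin. *)

theory Defs
  imports "HOL-Analysis.Analysis"
begin

text \<open>The function Phi-tilde on R^2 (modelled as real \<times> real, whose norm is Euclidean),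
  with c1 = alpha + beta and c2 = beta - alpha.\<close>
definition Phi_tilde :: "real \<Rightarrow> real \<Rightarrow> real \<times> real \<Rightarrow> real" where
  "Phi_tilde \<alpha> \<beta> = (\<lambda>(x, y).
     let c1 = \<alpha> + \<beta>; c2 = \<beta> - \<alpha> in
       1/4 * c1 * x\<^sup>2 + 1/4 * c2 * y\<^sup>2
       - 1/2 * ln (cosh ((c1 * x + c2 * y) / 2))
       - 1/2 * ln (cosh ((c1 * x - c2 * y) / 2)))"

definition critical_point :: "('a::real_normed_vector \<Rightarrow> real) \<Rightarrow> 'a \<Rightarrow> bool" where
  "critical_point f p \<longleftrightarrow> (f has_derivative (\<lambda>h. 0)) (at p)"

end

theory Submission
  imports Defs
begin

text \<open>In the coordinates \<open>s = x + y\<close>, \<open>t = x - y\<close> the critical point equations of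
  \<open>\<Phi>\<close> read \<open>s = tanh ((\<beta> s + \<alpha> t)/2)\<close>, \<open>t = tanh ((\<alpha> s + \<beta> t)/2)\<close>. Since
  \<open>\<bar>tanh z\<bar> \<le> \<bar>z\<bar>\<close>, adding the two equations in absolute value gives
  \<open>\<bar>s\<bar> + \<bar>t\<bar> \<le> (\<alpha> + \<beta>)/2 (\<bar>s\<bar> + \<bar>t\<bar>)\<close>, forcing \<open>s = t = 0\<close> because \<open>\<alpha> + \<beta> < 2\<close>.
  For the infimum, \<open>ln (cosh z) \<le> z\<^sup>2/2\<close> bounds \<open>\<Phi>\<close> below by a positive definite
  quadratic form, again because \<open>\<alpha> + \<beta> < 2\<close>.\<close>

lemma tanh_le_self:
  fixes z :: real
  assumes "0 \<le> z"
  shows "tanh z \<le> z"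
proof -
  have "(\<lambda>w. w - tanh w) 0 \<le> (\<lambda>w. w - tanh w) z"
  proof (rule DERIV_nonneg_imp_nondecreasing[of 0 z "\<lambda>w. w - tanh w", OF assms])
    fix w :: real
    have "((\<lambda>w. w - tanh w) has_real_derivative 1 - (1 - (tanh w)\<^sup>2) * 1) (at w)"
      by (intro derivative_intros) auto
    then show "\<exists>d. ((\<lambda>w. w - tanh w) has_real_derivative d) (at w) \<and> 0 \<le> d"
      by (intro exI[of _ "1 - (1 - (tanh w)\<^sup>2) * 1"]) simp
  qed
  then show ?thesis by simp
qed

lemma abs_tanh_le_abs: "\<bar>tanh z\<bar> \<le> \<bar>z :: real\<bar>"
  using tanh_le_self[of "\<bar>z\<bar>"] by simp

lemma has_real_derivative_ln_cosh: "((\<lambda>z. ln (cosh z)) has_real_derivative tanh z) (at (z::real))"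
  by (auto intro!: derivative_eq_intros simp: tanh_def)

lemma ln_cosh_le_half_square: "ln (cosh z) \<le> z\<^sup>2 / (2::real)"
proof -
  let ?g = "\<lambda>w::real. w\<^sup>2 / 2 - ln (cosh w)"
  have "?g 0 \<le> ?g \<bar>z\<bar>"
  proof (rule DERIV_nonneg_imp_nondecreasing[of 0 "\<bar>z\<bar>" ?g])
    fix w :: real assume "0 \<le> w"
    then have "0 \<le> w - tanh w" using tanh_le_self by simp
    moreover have "(?g has_real_derivative w - tanh w) (at w)"
      by (auto intro!: derivative_eq_intros simp: tanh_def)
    ultimately show "\<exists>d. (?g has_real_derivative d) (at w) \<and> 0 \<le> d" by blast
  qed simp
  then show ?thesis by simp
qed

lemma tanh_system_only_zero:
  fixes a b s t :: real
  assumes "0 \<le> a" "0 \<le> b" "a + b < 2"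
    and s: "s = tanh ((b * s + a * t) / 2)"
    and t: "t = tanh ((a * s + b * t) / 2)"
  shows "s = 0 \<and> t = 0"
proof -
  have "\<bar>s\<bar> \<le> \<bar>b * s + a * t\<bar> / 2"
    using abs_tanh_le_abs[of "(b * s + a * t) / 2"] s by simp
  also have "\<dots> \<le> (b * \<bar>s\<bar> + a * \<bar>t\<bar>) / 2"
    using abs_triangle_ineq[of "b * s" "a * t"] assms(1,2) by (simp add: abs_mult)
  finally have bound_s: "\<bar>s\<bar> \<le> (b * \<bar>s\<bar> + a * \<bar>t\<bar>) / 2" .
  have "\<bar>t\<bar> \<le> \<bar>a * s + b * t\<bar> / 2"
    using abs_tanh_le_abs[of "(a * s + b * t) / 2"] t by simp
  also have "\<dots> \<le> (a * \<bar>s\<bar> + b * \<bar>t\<bar>) / 2"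
    using abs_triangle_ineq[of "a * s" "b * t"] assms(1,2) by (simp add: abs_mult)
  finally have bound_t: "\<bar>t\<bar> \<le> (a * \<bar>s\<bar> + b * \<bar>t\<bar>) / 2" .
  have "(1 - (a + b) / 2) * (\<bar>s\<bar> + \<bar>t\<bar>) \<le> 0"
    using bound_s bound_t by (simp add: algebra_simps)
  moreover have "0 < 1 - (a + b) / 2" using assms(3) by simp
  ultimately have "\<bar>s\<bar> + \<bar>t\<bar> \<le> 0"
    by (simp add: mult_le_0_iff)
  then show ?thesis by (smt (verit) abs_ge_zero abs_eq_0)
qed

lemma has_derivative_Phi_tilde:
  fixes \<alpha> \<beta> x y :: real
  defines "A \<equiv> tanh (((\<alpha> + \<beta>) * x + (\<beta> - \<alpha>) * y) / 2)"
    and "B \<equiv> tanh (((\<alpha> + \<beta>) * x - (\<beta> - \<alpha>) * y) / 2)"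
  shows "(Phi_tilde \<alpha> \<beta> has_derivative
           (\<lambda>(h, k). (\<alpha> + \<beta>) / 2 * (x - (A + B) / 2) * h + (\<beta> - \<alpha>) / 2 * (y - (A - B) / 2) * k))
         (at (x, y))"
proof -
  \<comment> \<open>Naming \<open>ln \<circ> cosh\<close> stops \<open>derivative_eq_intros\<close> from splitting it into \<open>ln\<close> and \<open>cosh\<close>.\<close>
  define lc where "lc z = ln (cosh z)" for z :: real
  have lc: "(lc has_real_derivative tanh z) (at z)" for z
    unfolding lc_def[abs_def] by (rule has_real_derivative_ln_cosh)
  have Phi: "Phi_tilde \<alpha> \<beta> = (\<lambda>p. 1/4 * (\<alpha> + \<beta>) * (fst p)\<^sup>2 + 1/4 * (\<beta> - \<alpha>) * (snd p)\<^sup>2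
      - 1/2 * lc (((\<alpha> + \<beta>) * fst p + (\<beta> - \<alpha>) * snd p) / 2)
      - 1/2 * lc (((\<alpha> + \<beta>) * fst p - (\<beta> - \<alpha>) * snd p) / 2))"
    by (simp add: Phi_tilde_def lc_def fun_eq_iff Let_def)
  show ?thesis
    unfolding Phi A_def B_def
    by (rule has_derivative_eq_rhs, auto intro!: derivative_eq_intros lc[THEN DERIV_compose_FDERIV])
      (auto simp: fun_eq_iff field_simps)
qed

lemma critical_point_Phi_tilde_iff:
  assumes "\<alpha> + \<beta> \<noteq> 0" "\<beta> - \<alpha> \<noteq> 0"
  shows "critical_point (Phi_tilde \<alpha> \<beta>) (x, y) \<longleftrightarrow>
    x + y = tanh ((\<beta> * (x + y) + \<alpha> * (x - y)) / 2) \<and>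
    x - y = tanh ((\<alpha> * (x + y) + \<beta> * (x - y)) / 2)"
proof -
  define A where "A = tanh (((\<alpha> + \<beta>) * x + (\<beta> - \<alpha>) * y) / 2)"
  define B where "B = tanh (((\<alpha> + \<beta>) * x - (\<beta> - \<alpha>) * y) / 2)"
  let ?D = "\<lambda>(h, k). (\<alpha> + \<beta>) / 2 * (x - (A + B) / 2) * h + (\<beta> - \<alpha>) / 2 * (y - (A - B) / 2) * k"
  have D: "(Phi_tilde \<alpha> \<beta> has_derivative ?D) (at (x, y))"
    unfolding A_def B_def by (rule has_derivative_Phi_tilde)
  have "critical_point (Phi_tilde \<alpha> \<beta>) (x, y) \<longleftrightarrow> ?D = (\<lambda>_. 0)"
    unfolding critical_point_def using D has_derivative_unique by metis
  also have "\<dots> \<longleftrightarrow> (\<alpha> + \<beta>) / 2 * (x - (A + B) / 2) = 0 \<and> (\<beta> - \<alpha>) / 2 * (y - (A - B) / 2) = 0"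
  proof
    assume "?D = (\<lambda>_. 0)"
    then have "?D (1, 0) = 0" and "?D (0, 1) = 0" by simp_all
    then show "(\<alpha> + \<beta>) / 2 * (x - (A + B) / 2) = 0 \<and> (\<beta> - \<alpha>) / 2 * (y - (A - B) / 2) = 0"
      by simp
  next
    assume c: "(\<alpha> + \<beta>) / 2 * (x - (A + B) / 2) = 0 \<and> (\<beta> - \<alpha>) / 2 * (y - (A - B) / 2) = 0"
    show "?D = (\<lambda>_. 0)"
    proof
      fix hk :: "real \<times> real"
      show "?D hk = 0"
        by (cases hk) (simp only: case_prod_conv c[THEN conjunct1] c[THEN conjunct2] mult_zero_left add_0)
    qed
  qed
  also have "\<dots> \<longleftrightarrow> x + y = A \<and> x - y = B"
    using assms by auto
  finally have "critical_point (Phi_tilde \<alpha> \<beta>) (x, y) \<longleftrightarrow> x + y = A \<and> x - y = B" .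
  moreover have "(\<alpha> + \<beta>) * x + (\<beta> - \<alpha>) * y = \<beta> * (x + y) + \<alpha> * (x - y)"
    and "(\<alpha> + \<beta>) * x - (\<beta> - \<alpha>) * y = \<alpha> * (x + y) + \<beta> * (x - y)"
    by algebra+
  ultimately show ?thesis unfolding A_def B_def by (simp only:)
qed

lemma Phi_tilde_ge_quadratic:
  "(\<alpha> + \<beta>) * (2 - (\<alpha> + \<beta>)) / 8 * x\<^sup>2 + (\<beta> - \<alpha>) * (2 - (\<beta> - \<alpha>)) / 8 * y\<^sup>2
     \<le> Phi_tilde \<alpha> \<beta> (x, y)"
proof -
  define u where "u = ((\<alpha> + \<beta>) * x + (\<beta> - \<alpha>) * y) / 2"
  define v where "v = ((\<alpha> + \<beta>) * x - (\<beta> - \<alpha>) * y) / 2"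
  have "(\<alpha> + \<beta>) * (2 - (\<alpha> + \<beta>)) / 8 * x\<^sup>2 + (\<beta> - \<alpha>) * (2 - (\<beta> - \<alpha>)) / 8 * y\<^sup>2
      = 1/4 * (\<alpha> + \<beta>) * x\<^sup>2 + 1/4 * (\<beta> - \<alpha>) * y\<^sup>2 - 1/2 * (u\<^sup>2 / 2) - 1/2 * (v\<^sup>2 / 2)"
    unfolding u_def v_def by (simp add: power2_eq_square field_simps)
  also have "\<dots> \<le> 1/4 * (\<alpha> + \<beta>) * x\<^sup>2 + 1/4 * (\<beta> - \<alpha>) * y\<^sup>2
      - 1/2 * ln (cosh u) - 1/2 * ln (cosh v)"
    using ln_cosh_le_half_square[of u] ln_cosh_le_half_square[of v] by simp
  also have "\<dots> = Phi_tilde \<alpha> \<beta> (x, y)"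
    by (simp add: Phi_tilde_def u_def v_def Let_def)
  finally show ?thesis .
qed

lemma Phi_tilde_ge_norm_square:
  assumes "0 \<le> \<alpha>" and "\<alpha> < \<beta>" and "\<alpha> + \<beta> < 2"
  obtains m where "0 < m" and "\<And>p. m * (norm p)\<^sup>2 \<le> Phi_tilde \<alpha> \<beta> p"
proof -
  define m where "m = min ((\<alpha> + \<beta>) * (2 - (\<alpha> + \<beta>)) / 8) ((\<beta> - \<alpha>) * (2 - (\<beta> - \<alpha>)) / 8)"
  have "0 < m" unfolding m_def using assms by simp
  moreover have "m * (norm p)\<^sup>2 \<le> Phi_tilde \<alpha> \<beta> p" for p
  proof (cases p)
    case (Pair x y)
    have "m * (norm p)\<^sup>2 = m * x\<^sup>2 + m * y\<^sup>2" by (simp add: Pair norm_Pair algebra_simps)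
    also have "\<dots> \<le> Phi_tilde \<alpha> \<beta> p"
      using Phi_tilde_ge_quadratic[of \<alpha> \<beta> x y] unfolding Pair m_def
      by (smt (verit) min.cobounded1 min.cobounded2 mult_right_mono zero_le_power2)
    finally show ?thesis .
  qed
  ultimately show ?thesis using that by blast
qed

lemma INF_outside_ball_pos:
  fixes f :: "'a::{real_normed_vector, perfect_space} \<Rightarrow> real"
  assumes "0 < m" and f: "\<And>p. m * (norm p)\<^sup>2 \<le> f p" and "0 < r"
  shows "(INF p \<in> - ball 0 r. f p) > 0"
proof -
  obtain q :: 'a where "norm q = r"
    using vector_choose_size[of r] assms(3) by (metis less_imp_le)
  then have nonempty: "- ball (0::'a) r \<noteq> {}"
    by (metis ComplI empty_iff mem_ball_0 order.irrefl)
  have "m * r\<^sup>2 \<le> (INF p \<in> - ball 0 r. f p)"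
  proof (rule cINF_greatest[OF nonempty])
    fix p assume "p \<in> - ball (0::'a) r"
    then have "r \<le> norm p" by simp
    then have "r\<^sup>2 \<le> (norm p)\<^sup>2" using assms(3) by (intro power_mono) simp_all
    then have "m * r\<^sup>2 \<le> m * (norm p)\<^sup>2" using assms(1) by simp
    then show "m * r\<^sup>2 \<le> f p" using f[of p] by linarith
  qed
  moreover have "0 < m * r\<^sup>2" using assms by simp
  ultimately show ?thesis by linarith
qed

theorem mainTheorem6:
  fixes \<alpha> \<beta> :: real
  assumes "0 \<le> \<alpha>" and "\<alpha> < \<beta>" and "\<alpha> + \<beta> < 2"
  shows "{p. critical_point (Phi_tilde \<alpha> \<beta>) p} = {(0, 0)} \<and>
    (\<forall>r>0. (INF p \<in> - ball (0::real \<times> real) r. Phi_tilde \<alpha> \<beta> p) > 0)"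
proof
  have "critical_point (Phi_tilde \<alpha> \<beta>) (x, y) \<longleftrightarrow> x = 0 \<and> y = 0" for x y
    using critical_point_Phi_tilde_iff[of \<alpha> \<beta> x y] assms
      tanh_system_only_zero[of \<alpha> \<beta> "x + y" "x - y"] by auto
  then show "{p. critical_point (Phi_tilde \<alpha> \<beta>) p} = {(0, 0)}" by auto
next
  obtain m where "0 < m" and "\<And>p. m * (norm p)\<^sup>2 \<le> Phi_tilde \<alpha> \<beta> p"
    using Phi_tilde_ge_norm_square[OF assms] by blast
  then show "\<forall>r>0. (INF p \<in> - ball (0::real \<times> real) r. Phi_tilde \<alpha> \<beta> p) > 0"
    using INF_outside_ball_pos by blast
qed

end
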